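(* Let $G$ be a finite simple graph such that the cut polytope $\mathrm{Cut}(G)$ is compressed, and let $\Sigma$ be a special simplex in $\mathrm{Cut}(G)$. If $G$ satisfies one of the conditions (a) there exists an edge of $G$ that is contained in no triangle of $G$, or (b) $G$ has an induced cycle of length $4$, then $\dim\Sigma=1$.
   Context: $G$ is a finite graph without loops or multiple edges on vertex set $[n]$ with edge set $\{e_1,\dots,e_m\}$. For $S\subset[n]$, $\delta_G(S)\in\{0,1\}^m$ has coordinate $1$ at edge $\{a,b\}$ iff $|S\cap\{a,b\}|=1$; the cut polytope $\mathrm{Cut}(G)\subset\mathbb{R}^m$ is the convex hull of all $\delta_G(S)$. An integral polytope is compressed if all of its reverse lexicographic (pulling) triangulations, using its lattice points, are unimodular. A $d$-simplex $\Sigma$ each of whose vertices is a vertex of a polytope $P$ is a special simplex in $P$ if each facet of $P$ contains exactly $d$ of the vertices of $\Sigma$. An induced cycle is a cycle without chords; a triangle is a cycle of length $3$. *)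

theory Defs
  imports "HOL-Analysis.Analysis"
begin

text \<open>Coordinates of R^m are
indexed by the edges, i.e. R^m is real ^ 'e.\<close>

definition simple_graph :: "('e::finite \<Rightarrow> 'v::finite set) \<Rightarrow> bool" where
  "simple_graph ends \<longleftrightarrow> inj ends \<and> (\<forall>e. card (ends e) = 2)"

definition adj :: "('e \<Rightarrow> 'v set) \<Rightarrow> 'v \<Rightarrow> 'v \<Rightarrow> bool" where
  "adj ends u w \<longleftrightarrow> {u, w} \<in> range ends"

definition cut_vector :: "('e::finite \<Rightarrow> 'v set) \<Rightarrow> 'v set \<Rightarrow> real ^ 'e" where
  "cut_vector ends S = (\<chi> e. if card (S \<inter> ends e) = 1 then 1 else 0)"

definition cut_polytope :: "('e::finite \<Rightarrow> 'v set) \<Rightarrow> (real ^ 'e) set" where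
  "cut_polytope ends = convex hull (range (cut_vector ends))"

definition lattice_points :: "(real ^ 'n::finite) set \<Rightarrow> (real ^ 'n) set" where
  "lattice_points P = {x \<in> P. \<forall>i. x $ i \<in> \<int>}"

text \<open>Maximal simplices (given by vertex sets) of the pulling (reverse lexicographic)
triangulation of a polytope Q with respect to the order given by the rank function r:
pull the earliest vertex v and cone it over the pulling triangulations of the facets
of Q not containing v.\<close>
inductive pulling_simplex :: "('a::euclidean_space \<Rightarrow> nat) \<Rightarrow> 'a set \<Rightarrow> 'a set \<Rightarrow> bool"
  for r where
  point: "pulling_simplex r {v} {v}"
| cone: "\<lbrakk> v extreme_point_of Q; \<forall>w. w extreme_point_of Q \<longrightarrow> r v \<le> r w;
           F facet_of Q; v \<notin> F; pulling_simplex r F S \<rbrakk>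
         \<Longrightarrow> pulling_simplex r Q (insert v S)"

text \<open>A simplex with vertex set S is unimodular w.r.t. the lattice points A of the
polytope: its vertices are in A, affinely independent, and they generate the same
affine lattice as A (normalized volume 1 w.r.t. the lattice generated by A).\<close>
definition unimodular_wrt :: "'a::euclidean_space set \<Rightarrow> 'a set \<Rightarrow> bool" where
  "unimodular_wrt A S \<longleftrightarrow> S \<subseteq> A \<and> \<not> affine_dependent S \<and>
     (\<forall>a\<in>A. \<exists>c :: 'a \<Rightarrow> int. (\<Sum>s\<in>S. c s) = 1 \<and> a = (\<Sum>s\<in>S. of_int (c s) *\<^sub>R s))"

definition compressed :: "(real ^ 'n::finite) set \<Rightarrow> bool" where
  "compressed P \<longleftrightarrow>
     (\<forall>r :: real ^ 'n \<Rightarrow> nat. inj_on r (lattice_points P) \<longrightarrow>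
        (\<forall>S. pulling_simplex r P S \<longrightarrow> unimodular_wrt (lattice_points P) S))"

definition special_simplex :: "'a::euclidean_space set \<Rightarrow> int \<Rightarrow> 'a set \<Rightarrow> bool" where
  "special_simplex P d \<Sigma> \<longleftrightarrow> d simplex \<Sigma> \<and>
     {v. v extreme_point_of \<Sigma>} \<subseteq> {v. v extreme_point_of P} \<and>
     (\<forall>F. F facet_of P \<longrightarrow> int (card ({v. v extreme_point_of \<Sigma>} \<inter> F)) = d)"

definition edge_in_no_triangle :: "('e \<Rightarrow> 'v set) \<Rightarrow> bool" where
  "edge_in_no_triangle ends \<longleftrightarrow>
     (\<exists>a b. adj ends a b \<and> \<not> (\<exists>c. adj ends a c \<and> adj ends b c))"

definition has_induced_4cycle :: "('e \<Rightarrow> 'v set) \<Rightarrow> bool" where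
  "has_induced_4cycle ends \<longleftrightarrow>
     (\<exists>a b c d. distinct [a, b, c, d] \<and> adj ends a b \<and> adj ends b c \<and> adj ends c d \<and>
        adj ends d a \<and> \<not> adj ends a c \<and> \<not> adj ends b d)"

end

theory Submission
  imports Defs
begin

(* Under either hypothesis Cut(G) has a facet F and a switching -- the affine automorphism of
   Cut(G) mapping delta(S) to delta of the symmetric difference of S and R -- that sends F to a
   facet F' such that every vertex of Cut(G) lies on exactly one of F and F': for an edge ab in no
   triangle take the edge facet x_ab = 0 and R = {a}; for a chordless 4-cycle abcd take the cycle
   facet x_ab = x_bc + x_cd + x_da and R = {a, c}.  A special d-simplex has exactly d vertices on
   each facet, so its d + 1 vertices number 2d, and d = 1. *)

lemma facet_of_convex_hull_supporting_hyperplane: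
  fixes h :: "'a::euclidean_space"
  assumes "0 \<in> V" and le: "\<And>v. v \<in> V \<Longrightarrow> h \<bullet> v \<le> 0"
    and "w \<in> V" "h \<bullet> w < 0"
    and span: "{x. h \<bullet> x = 0} \<subseteq> span {v \<in> V. h \<bullet> v = 0}"
  shows "(convex hull V \<inter> {x. h \<bullet> x = 0}) facet_of convex hull V"
proof -
  let ?P = "convex hull V" and ?H = "{x. h \<bullet> x = 0}"
  let ?F = "?P \<inter> ?H"
  have "?P \<subseteq> {x. h \<bullet> x \<le> 0}"
    by (rule hull_minimal) (use le convex_halfspace_le in auto)
  then have face: "?F face_of ?P"
    by (intro face_of_Int_supporting_hyperplane_le) auto
  have "0 \<in> ?F"
    using \<open>0 \<in> V\<close> hull_inc by fastforce
  have "span ?F = ?H"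
  proof
    show "span ?F \<subseteq> ?H"
      by (rule span_minimal) (auto simp: subspace_hyperplane)
    have "{v \<in> V. h \<bullet> v = 0} \<subseteq> ?F"
      using hull_inc by fastforce
    then show "?H \<subseteq> span ?F"
      using span span_mono by blast
  qed
  then have hull_F: "affine hull ?F = ?H"
    using affine_hull_span_0 \<open>0 \<in> ?F\<close> hull_inc by metis
  have "h \<noteq> 0"
    using \<open>h \<bullet> w < 0\<close> by auto
  then have dim_F: "aff_dim ?F = DIM('a) - 1"
    by (simp add: hull_F flip: aff_dim_affine_hull[of ?F])
  have "w \<in> affine hull ?P" "w \<notin> ?H"
    using \<open>w \<in> V\<close> \<open>h \<bullet> w < 0\<close> hull_inc by fastforce+
  moreover have "affine hull ?F \<subseteq> affine hull ?P"
    by (rule hull_mono) blast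
  ultimately have "affine hull ?F \<subset> affine hull ?P"
    using hull_F by blast
  then have "aff_dim ?F < aff_dim ?P"
    by (rule aff_dim_psubset)
  then have "aff_dim ?P = DIM('a)"
    using dim_F aff_dim_le_DIM[of ?P] by linarith
  then show ?thesis
    unfolding facet_of_def using face \<open>0 \<in> ?F\<close> dim_F by auto
qed

lemma facet_of_affine_automorphism:
  assumes "linear f" "inj f" and P: "(\<lambda>x. c + f x) ` P = P" and "F facet_of P"
  shows "(\<lambda>x. c + f x) ` F facet_of P"
proof -
  have image: "(\<lambda>x. c + f x) ` X = (+) c ` f ` X" for X
    by (simp add: image_image)
  have "(\<lambda>x. c + f x) ` F face_of (\<lambda>x. c + f x) ` P"
    using \<open>F facet_of P\<close> by (simp add: image facet_of_def face_of_linear_image assms(1,2))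
  moreover have "aff_dim ((\<lambda>x. c + f x) ` X) = aff_dim X" for X
    by (simp add: image aff_dim_translation_eq assms(1,2))
  ultimately show ?thesis
    using \<open>F facet_of P\<close> P by (simp add: facet_of_def)
qed

lemma special_simplex_dim_eq_1:
  fixes P :: "'a::euclidean_space set"
  assumes "special_simplex P d \<Sigma>" and "F facet_of P" "F' facet_of P"
    and complement: "\<And>v. v extreme_point_of P \<Longrightarrow> v \<in> F' \<longleftrightarrow> v \<notin> F"
  shows "d = 1"
proof -
  obtain C where C: "\<not> affine_dependent C" "int (card C) = d + 1" "\<Sigma> = convex hull C"
    using assms(1) unfolding special_simplex_def simplex_def by blast
  have "{v. v extreme_point_of \<Sigma>} = C"
    using extreme_point_of_convex_hull_affine_independent[OF C(1)] C(3) by blast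
  then have "C \<subseteq> {v. v extreme_point_of P}"
    and meets: "\<And>G. G facet_of P \<Longrightarrow> int (card (C \<inter> G)) = d"
    using assms(1) unfolding special_simplex_def by auto
  then have "C = (C \<inter> F) \<union> (C \<inter> F')" "(C \<inter> F) \<inter> (C \<inter> F') = {}"
    using complement by blast+
  moreover have "finite C"
    using aff_independent_finite[OF C(1)] .
  ultimately have "card C = card (C \<inter> F) + card (C \<inter> F')"
    by (metis card_Un_disjoint finite_Int)
  then show ?thesis
    using C(2) meets assms(2,3) by simp
qed

lemma in_span_if_axes_in_span:
  fixes y :: "real ^ 'n::finite"
  assumes "\<And>g. g \<notin> E \<Longrightarrow> axis g 1 \<in> span T" and "\<And>g. g \<in> E \<Longrightarrow> y $ g = 0"
  shows "y \<in> span T"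
proof -
  have "y = (\<Sum>g\<in>UNIV. y $ g *\<^sub>R axis g 1)"
    using basis_expansion[of y] by (simp add: scalar_mult_eq_scaleR)
  also have "\<dots> = (\<Sum>g\<in>UNIV - E. y $ g *\<^sub>R axis g 1)"
    by (rule sum.mono_neutral_right) (use assms(2) in auto)
  also have "\<dots> \<in> span T"
    by (intro span_sum span_scale) (use assms(1) in auto)
  finally show ?thesis .
qed

lemma simple_graph_edgeE:
  assumes "simple_graph ends"
  obtains p q where "p \<noteq> q" "ends g = {p, q}"
  using assms unfolding simple_graph_def by (metis card_2_iff)

lemma simple_graph_ends_neq:
  assumes "simple_graph ends" "ends f = {u, w}"
  shows "u \<noteq> w"
proof
  assume "u = w"
  then have "card (ends f) = 1"
    using assms(2) by simp
  then show False
    using assms(1) by (simp add: simple_graph_def)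
qed

lemma simple_graph_ends_inject:
  assumes "simple_graph ends"
  shows "ends f = ends g \<longleftrightarrow> f = g"
  using assms unfolding simple_graph_def inj_def by metis

lemma ends_eq_doubleton:
  assumes "simple_graph ends" "u \<in> ends g" "w \<in> ends g" "u \<noteq> w"
  shows "ends g = {u, w}"
proof -
  obtain p q where "p \<noteq> q" "ends g = {p, q}"
    using simple_graph_edgeE[OF assms(1)] .
  then show ?thesis
    using assms(2-4) by auto
qed

lemma adj_sym: "adj ends u w \<longleftrightarrow> adj ends w u"
  by (simp add: adj_def insert_commute)

lemma adjE:
  assumes "adj ends u w"
  obtains f where "ends f = {u, w}"
  using assms unfolding adj_def by blast

lemma adjI: "ends f = {u, w} \<Longrightarrow> adj ends u w"
  unfolding adj_def by (metis rangeI)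

lemma cut_vector_nth:
  assumes "ends g = {p, q}" "p \<noteq> q"
  shows "cut_vector ends S $ g = (if (p \<in> S) = (q \<in> S) then 0 else 1)"
  using assms by (cases "p \<in> S"; cases "q \<in> S") (auto simp: cut_vector_def Int_insert_left)

lemma cut_vector_nth_cases: "cut_vector ends S $ g = 0 \<or> cut_vector ends S $ g = 1"
  by (simp add: cut_vector_def)

lemma cut_vector_empty [simp]: "cut_vector ends {} = 0"
  by (simp add: cut_vector_def vec_eq_iff)

lemma cut_vector_in_cut_polytope: "cut_vector ends S \<in> cut_polytope ends"
  unfolding cut_polytope_def by (rule hull_inc) simp

lemma extreme_point_of_cut_polytope:
  "v extreme_point_of cut_polytope ends \<Longrightarrow> v \<in> range (cut_vector ends)"
  unfolding cut_polytope_def by (rule extreme_point_of_convex_hull)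

definition switching_sign :: "('e::finite \<Rightarrow> 'v set) \<Rightarrow> 'v set \<Rightarrow> real ^ 'e \<Rightarrow> real ^ 'e" where
  "switching_sign ends R x = (\<chi> g. (1 - 2 * cut_vector ends R $ g) * x $ g)"

definition switching :: "('e::finite \<Rightarrow> 'v set) \<Rightarrow> 'v set \<Rightarrow> real ^ 'e \<Rightarrow> real ^ 'e" where
  "switching ends R x = cut_vector ends R + switching_sign ends R x"

lemma linear_switching_sign: "linear (switching_sign ends R)"
  by (rule linearI) (auto simp: switching_sign_def vec_eq_iff algebra_simps)

lemma switching_sign_switching_sign [simp]:
  "switching_sign ends R (switching_sign ends R x) = x"
proof -
  have "(1 - 2 * c) * ((1 - 2 * c) * y) = y" if "c = 0 \<or> c = 1" for c y :: real
    using that by auto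
  then show ?thesis
    by (simp add: switching_sign_def vec_eq_iff cut_vector_nth_cases)
qed

lemma inj_switching_sign: "inj (switching_sign ends R)"
  by (metis injI switching_sign_switching_sign)

lemma switching_switching [simp]: "switching ends R (switching ends R x) = x"
proof -
  have "c + (1 - 2 * c) * (c + (1 - 2 * c) * y) = y" if "c = 0 \<or> c = 1" for c y :: real
    using that by auto
  then show ?thesis
    by (simp add: switching_def switching_sign_def vec_eq_iff cut_vector_nth_cases)
qed

lemma mem_switching_image: "x \<in> switching ends R ` X \<longleftrightarrow> switching ends R x \<in> X"
  by (auto intro: image_eqI[where x = "switching ends R x"])

lemma switching_cut_vector:
  assumes "simple_graph ends"
  shows "switching ends R (cut_vector ends S) = cut_vector ends (sym_diff S R)"
proof -
  have "switching ends R (cut_vector ends S) $ g = cut_vector ends (sym_diff S R) $ g" for g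
  proof -
    obtain p q where pq: "p \<noteq> q" "ends g = {p, q}"
      using simple_graph_edgeE[OF assms] .
    show ?thesis
      using pq(1) by (cases "p \<in> S"; cases "q \<in> S"; cases "p \<in> R"; cases "q \<in> R")
        (simp_all add: switching_def switching_sign_def cut_vector_nth[of ends g p q, OF pq(2,1)])
  qed
  then show ?thesis
    by (simp add: vec_eq_iff)
qed

lemma switching_cut_polytope:
  assumes "simple_graph ends"
  shows "switching ends R ` cut_polytope ends = cut_polytope ends"
proof -
  have "switching ends R ` range (cut_vector ends) = range (cut_vector ends)"
  proof (intro subset_antisym subsetI)
    show "x \<in> switching ends R ` range (cut_vector ends)" if "x \<in> range (cut_vector ends)" for x
      using that by (auto simp: mem_switching_image switching_cut_vector[OF assms])
  qed (auto simp: switching_cut_vector[OF assms])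
  moreover have "switching ends R ` X = (+) (cut_vector ends R) ` switching_sign ends R ` X" for X
    by (simp add: switching_def image_image)
  ultimately show ?thesis
    unfolding cut_polytope_def
    by (metis convex_hull_linear_image[OF linear_switching_sign] convex_hull_translation)
qed

lemma complementary_facet_by_switching:
  assumes "simple_graph ends" and "F facet_of cut_polytope ends"
    and complement: "\<And>S. cut_vector ends (sym_diff S R) \<in> F \<longleftrightarrow> cut_vector ends S \<notin> F"
  obtains F' where "F' facet_of cut_polytope ends"
    and "\<forall>S. cut_vector ends S \<in> F' \<longleftrightarrow> cut_vector ends S \<notin> F"
proof
  have "switching ends R = (\<lambda>x. cut_vector ends R + switching_sign ends R x)"
    by (simp add: switching_def fun_eq_iff)
  then show "switching ends R ` F facet_of cut_polytope ends"
    using facet_of_affine_automorphism[OF linear_switching_sign inj_switching_sign]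
      switching_cut_polytope[OF assms(1)] assms(2) by metis
  show "\<forall>S. cut_vector ends S \<in> switching ends R ` F \<longleftrightarrow> cut_vector ends S \<notin> F"
    by (simp add: mem_switching_image switching_cut_vector[OF assms(1)] complement)
qed

lemma cut_polytope_facetI:
  assumes "\<And>S. h \<bullet> cut_vector ends S \<le> 0" and "h \<bullet> cut_vector ends R < 0"
    and "{x. h \<bullet> x = 0} \<subseteq> span {cut_vector ends S | S. h \<bullet> cut_vector ends S = 0}"
  shows "(cut_polytope ends \<inter> {x. h \<bullet> x = 0}) facet_of cut_polytope ends"
proof -
  have "0 \<in> range (cut_vector ends)"
    using rangeI[of "cut_vector ends" "{}"] by simp
  moreover have "{v \<in> range (cut_vector ends). h \<bullet> v = 0}
      = {cut_vector ends S | S. h \<bullet> cut_vector ends S = 0}"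
    by auto
  ultimately show ?thesis
    unfolding cut_polytope_def
    by (intro facet_of_convex_hull_supporting_hyperplane[where w = "cut_vector ends R"])
      (use assms in auto)
qed

lemma crossing_singletons:
  assumes "simple_graph ends" "ends f = {u, w}"
  shows "ends g \<inter> {u} \<noteq> {} \<and> ends g \<inter> {w} \<noteq> {} \<longleftrightarrow> g = f"
  using assms ends_eq_doubleton[OF assms(1), of u g w] simple_graph_ends_neq[OF assms]
    simple_graph_ends_inject[OF assms(1)] by auto

lemma cut_vector_crossing_edge:
  assumes "simple_graph ends" "A \<inter> B = {}" "T \<inter> A = {}" "T \<inter> B = {}"
    and crossing: "\<And>g. ends g \<inter> A \<noteq> {} \<and> ends g \<inter> B \<noteq> {} \<longleftrightarrow> g = f"
  shows "cut_vector ends (T \<union> A) + cut_vector ends (T \<union> B) - cut_vector ends (T \<union> A \<union> B)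
      - cut_vector ends T = 2 *\<^sub>R axis f 1"
proof -
  have "(cut_vector ends (T \<union> A) + cut_vector ends (T \<union> B) - cut_vector ends (T \<union> A \<union> B)
      - cut_vector ends T) $ g = (2 *\<^sub>R axis f 1) $ g" for g
  proof -
    obtain p q where pq: "p \<noteq> q" "ends g = {p, q}"
      using simple_graph_edgeE[OF assms(1)] .
    have "g = f \<longleftrightarrow> (p \<in> A \<and> q \<in> B) \<or> (p \<in> B \<and> q \<in> A)"
      using crossing[of g] pq(2) assms(2) by auto
    moreover have "(cut_vector ends (T \<union> A) + cut_vector ends (T \<union> B)
        - cut_vector ends (T \<union> A \<union> B) - cut_vector ends T) $ g
      = (if (p \<in> A \<and> q \<in> B) \<or> (p \<in> B \<and> q \<in> A) then 2 else 0)"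
      using assms(2-4)
      by (cases "p \<in> T"; cases "q \<in> T"; cases "p \<in> A"; cases "q \<in> A"; cases "p \<in> B"; cases "q \<in> B")
        (auto simp: cut_vector_nth[of ends g p q, OF pq(2,1)])
    ultimately show ?thesis
      by (simp add: axis_def)
  qed
  then show ?thesis
    by (simp add: vec_eq_iff)
qed

lemma axis_in_span_cut_vectors:
  assumes "simple_graph ends" "A \<inter> B = {}" "T \<inter> A = {}" "T \<inter> B = {}"
    and "\<And>g. ends g \<inter> A \<noteq> {} \<and> ends g \<inter> B \<noteq> {} \<longleftrightarrow> g = f"
    and "Q (T \<union> A)" "Q (T \<union> B)" "Q (T \<union> A \<union> B)" "Q T"
  shows "axis f 1 \<in> span {cut_vector ends S | S. Q S}"
proof -
  have "(1 / 2) *\<^sub>R (cut_vector ends (T \<union> A) + cut_vector ends (T \<union> B)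
      - cut_vector ends (T \<union> A \<union> B) - cut_vector ends T) \<in> span {cut_vector ends S | S. Q S}"
    by (intro span_scale span_add span_diff span_base) (use assms(6-9) in auto)
  then show ?thesis
    by (simp add: cut_vector_crossing_edge[OF assms(1-5)])
qed

locale triangle_free_edge =
  fixes ends :: "'e::finite \<Rightarrow> 'v::finite set" and a b :: 'v and e :: 'e
  assumes simple: "simple_graph ends" and edge: "ends e = {a, b}"
    and no_triangle: "\<not> (\<exists>c. adj ends a c \<and> adj ends b c)"
begin

lemma ends_neq: "a \<noteq> b"
  using simple_graph_ends_neq[OF simple edge] .

lemma cut_vector_edge: "cut_vector ends S $ e = (if (a \<in> S) = (b \<in> S) then 0 else 1)"
  using cut_vector_nth[of ends e a b, OF edge ends_neq] .

lemma unique_crossing_edge: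
  assumes f: "ends f = {u, v}" "u \<in> {a, b}" "v \<notin> {a, b}"
  shows "ends g \<inter> {v} \<noteq> {} \<and> ends g \<inter> {a, b} \<noteq> {} \<longleftrightarrow> g = f"
proof
  assume "ends g \<inter> {v} \<noteq> {} \<and> ends g \<inter> {a, b} \<noteq> {}"
  then obtain u' where u': "u' \<in> {a, b}" "u' \<in> ends g" "v \<in> ends g"
    by blast
  moreover have "u' \<noteq> v"
    using u'(1) f(3) by blast
  ultimately have g: "ends g = {u', v}"
    using ends_eq_doubleton[OF simple] by blast
  show "g = f"
  proof (cases "u' = u")
    case True
    then have "ends g = ends f"
      using g f(1) by simp
    then show ?thesis
      using simple_graph_ends_inject[OF simple] by blast
  next
    case False
    then have "{u, u'} = {a, b}"
      using f(2) u'(1) by auto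
    moreover have "adj ends u v" "adj ends u' v"
      using adjI[of ends f u v, OF f(1)] adjI[of ends g u' v, OF g] by blast+
    ultimately show ?thesis
      using no_triangle unfolding doubleton_eq_iff by blast
  qed
next
  assume "g = f"
  then show "ends g \<inter> {v} \<noteq> {} \<and> ends g \<inter> {a, b} \<noteq> {}"
    using f(1,2) by auto
qed

lemma axis_in_span_tight:
  assumes "f \<noteq> e"
  shows "axis f 1 \<in> span {cut_vector ends S | S. cut_vector ends S $ e = 0}"
proof -
  have incident: "axis f 1 \<in> span {cut_vector ends S | S. cut_vector ends S $ e = 0}"
    if f: "ends f = {u, v}" "u \<in> {a, b}" "v \<notin> {a, b}" for u v
    by (rule axis_in_span_cut_vectors[OF simple, where A = "{v}" and B = "{a, b}" and T = "{}"])
      (use unique_crossing_edge[OF f] f(3) in \<open>auto simp: cut_vector_edge\<close>)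
  obtain u v where uv: "u \<noteq> v" "ends f = {u, v}"
    using simple_graph_edgeE[OF simple] .
  have "\<not> (u \<in> {a, b} \<and> v \<in> {a, b})"
    using assms uv edge simple_graph_ends_inject[OF simple, of f e] by (auto simp: doubleton_eq_iff)
  then consider "u \<notin> {a, b}" "v \<notin> {a, b}" | "u \<in> {a, b}" "v \<notin> {a, b}"
    | "v \<in> {a, b}" "u \<notin> {a, b}"
    by blast
  then show ?thesis
  proof cases
    case 1
    then show ?thesis
      using uv(1) by (intro axis_in_span_cut_vectors[OF simple _ _ _ crossing_singletons[OF simple uv(2)],
          where T = "{}"]) (auto simp: cut_vector_edge)
  next
    case 2
    then show ?thesis
      using incident[OF uv(2)] by blast
  next
    case 3
    moreover have "ends f = {v, u}"
      using uv(2) by (simp add: insert_commute)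
    ultimately show ?thesis
      using incident by blast
  qed
qed

lemma edge_facet_of_cut_polytope:
  "(cut_polytope ends \<inter> {x. x $ e = 0}) facet_of cut_polytope ends"
proof -
  have h: "(- axis e 1) \<bullet> x = - x $ e" for x :: "real ^ 'e"
    by (simp add: inner_axis')
  have "(cut_polytope ends \<inter> {x. (- axis e 1) \<bullet> x = 0}) facet_of cut_polytope ends"
  proof (rule cut_polytope_facetI[where R = "{a}"])
    show "(- axis e 1) \<bullet> cut_vector ends S \<le> 0" for S
      unfolding h by (simp add: cut_vector_edge)
    show "(- axis e 1) \<bullet> cut_vector ends {a} < 0"
      unfolding h using ends_neq by (simp add: cut_vector_edge)
    have "x \<in> span {cut_vector ends S | S. cut_vector ends S $ e = 0}" if "x $ e = 0" for x
      using in_span_if_axes_in_span[of "{e}"] axis_in_span_tight that by blast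
    then show "{x. (- axis e 1) \<bullet> x = 0}
        \<subseteq> span {cut_vector ends S | S. (- axis e 1) \<bullet> cut_vector ends S = 0}"
      unfolding h by auto
  qed
  then show ?thesis
    unfolding h by simp
qed

end

locale chordless_square =
  fixes ends :: "'e::finite \<Rightarrow> 'v::finite set" and a b c d :: 'v and e1 e2 e3 e4 :: 'e
  assumes simple: "simple_graph ends" and distinct_vertices: "distinct [a, b, c, d]"
    and edges: "ends e1 = {a, b}" "ends e2 = {b, c}" "ends e3 = {c, d}" "ends e4 = {d, a}"
    and no_chords: "\<not> adj ends a c" "\<not> adj ends b d"
begin

definition tight :: "'v set \<Rightarrow> bool" where
  "tight S \<longleftrightarrow> cut_vector ends S $ e1
     = cut_vector ends S $ e2 + cut_vector ends S $ e3 + cut_vector ends S $ e4"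

lemma cut_vector_edges:
  "cut_vector ends S $ e1 = (if (a \<in> S) = (b \<in> S) then 0 else 1)"
  "cut_vector ends S $ e2 = (if (b \<in> S) = (c \<in> S) then 0 else 1)"
  "cut_vector ends S $ e3 = (if (c \<in> S) = (d \<in> S) then 0 else 1)"
  "cut_vector ends S $ e4 = (if (d \<in> S) = (a \<in> S) then 0 else 1)"
  using distinct_vertices
    cut_vector_nth[of ends e1 a b, OF edges(1)] cut_vector_nth[of ends e2 b c, OF edges(2)]
    cut_vector_nth[of ends e3 c d, OF edges(3)] cut_vector_nth[of ends e4 d a, OF edges(4)]
  by auto

lemma tight_iff:
  "tight S \<longleftrightarrow> (if (a \<in> S) = (b \<in> S) then 0 else 1) = (if (b \<in> S) = (c \<in> S) then 0 else 1)
      + (if (c \<in> S) = (d \<in> S) then 0 else 1) + (if (d \<in> S) = (a \<in> S) then 0 else (1::real))"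
  by (simp add: tight_def cut_vector_edges)

lemma tight_Un_outside:
  assumes "v \<notin> {a, b, c, d}"
  shows "tight (X \<union> {v}) \<longleftrightarrow> tight X"
proof -
  have "w \<in> X \<union> {v} \<longleftrightarrow> w \<in> X" if "w \<in> {a, b, c, d}" for w
    using assms that by auto
  then show ?thesis
    unfolding tight_iff by simp
qed

text \<open>Switching at \<open>{a, c}\<close> toggles all four edges of the square, and this exchanges the
  tight with the non-tight cut patterns.\<close>

lemma tight_sym_diff: "tight (sym_diff S {a, c}) \<longleftrightarrow> \<not> tight S"
proof -
  have "a \<in> sym_diff S {a, c} \<longleftrightarrow> a \<notin> S" "b \<in> sym_diff S {a, c} \<longleftrightarrow> b \<in> S"
    "c \<in> sym_diff S {a, c} \<longleftrightarrow> c \<notin> S" "d \<in> sym_diff S {a, c} \<longleftrightarrow> d \<in> S"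
    using distinct_vertices by auto
  then show ?thesis
    by (cases "a \<in> S"; cases "b \<in> S"; cases "c \<in> S"; cases "d \<in> S") (simp_all add: tight_iff)
qed

lemma axis_in_span_tight_incident:
  assumes f: "ends f = {u, v}" "u \<in> {a, b, c, d}" "v \<notin> {a, b, c, d}"
  shows "axis f 1 \<in> span {cut_vector ends S | S. tight S}"
proof -
  obtain T where T: "T \<subseteq> {a, b, c, d}" "u \<notin> T" "tight T" "tight (T \<union> {u})"
  proof -
    consider "u = a" | "u = b" | "u = c" | "u = d"
      using f(2) by blast
    then show thesis
    proof cases
      case 1
      then show ?thesis using that[of "{}"] distinct_vertices by (auto simp: tight_iff)
    next
      case 2
      then show ?thesis using that[of "{}"] distinct_vertices by (auto simp: tight_iff)
    next
      case 3
      then show ?thesis using that[of "{b}"] distinct_vertices by (auto simp: tight_iff)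
    next
      case 4
      then show ?thesis using that[of "{a}"] distinct_vertices by (auto simp: tight_iff)
    qed
  qed
  have "u \<noteq> v" "v \<notin> T"
    using f(2,3) T(1) by auto
  then show ?thesis
    using T(2-4) tight_Un_outside[OF f(3), of T] tight_Un_outside[OF f(3), of "T \<union> {u}"]
    by (intro axis_in_span_cut_vectors[OF simple _ _ _ crossing_singletons[OF simple f(1)],
        where T = T]) auto
qed

lemma axis_in_span_tight:
  assumes "f \<notin> {e1, e2, e3, e4}"
  shows "axis f 1 \<in> span {cut_vector ends S | S. tight S}"
proof -
  obtain u v where uv: "u \<noteq> v" "ends f = {u, v}"
    using simple_graph_edgeE[OF simple] .
  have "\<not> (u \<in> {a, b, c, d} \<and> v \<in> {a, b, c, d})"
  proof
    assume "u \<in> {a, b, c, d} \<and> v \<in> {a, b, c, d}"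
    moreover have "ends f \<noteq> ends e1" "ends f \<noteq> ends e2" "ends f \<noteq> ends e3" "ends f \<noteq> ends e4"
      using assms simple_graph_ends_inject[OF simple] by blast+
    moreover have "\<not> adj ends c a" "\<not> adj ends d b"
      using no_chords adj_sym by metis+
    ultimately show False
      using uv adjI[of ends f u v, OF uv(2)] edges no_chords by (auto simp: insert_commute)
  qed
  then consider "u \<notin> {a, b, c, d}" "v \<notin> {a, b, c, d}"
    | "u \<in> {a, b, c, d}" "v \<notin> {a, b, c, d}" | "v \<in> {a, b, c, d}" "u \<notin> {a, b, c, d}"
    by blast
  then show ?thesis
  proof cases
    case 1
    then show ?thesis
      using uv(1) by (intro axis_in_span_cut_vectors[OF simple _ _ _ crossing_singletons[OF simple uv(2)],
          where T = "{}"]) (auto simp: tight_iff)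
  next
    case 2
    then show ?thesis
      using axis_in_span_tight_incident[OF uv(2)] by blast
  next
    case 3
    moreover have "ends f = {v, u}"
      using uv(2) by (simp add: insert_commute)
    ultimately show ?thesis
      using axis_in_span_tight_incident by blast
  qed
qed

lemma hyperplane_subset_span:
  "{x. x $ e1 = x $ e2 + x $ e3 + x $ e4} \<subseteq> span {cut_vector ends S | S. tight S}"
proof
  let ?T = "{cut_vector ends S | S. tight S}"
  fix x :: "real ^ 'e" assume "x \<in> {x. x $ e1 = x $ e2 + x $ e3 + x $ e4}"
  then have x: "x $ e1 = x $ e2 + x $ e3 + x $ e4"
    by simp
  \<comment> \<open>On the square edges the tight cut vectors of \<open>{b}\<close>, \<open>{a, d}\<close>, \<open>{a}\<close> are
    \<open>e1 + e2\<close>, \<open>e1 + e3\<close>, \<open>e1 + e4\<close>, so subtracting them clears \<open>x\<close> there.\<close>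
  define y where "y = x - x $ e2 *\<^sub>R cut_vector ends {b} - x $ e3 *\<^sub>R cut_vector ends {a, d}
    - x $ e4 *\<^sub>R cut_vector ends {a}"
  have "y $ g = 0" if "g \<in> {e1, e2, e3, e4}" for g
    using that x distinct_vertices by (auto simp: y_def cut_vector_edges)
  then have "y \<in> span ?T"
    using in_span_if_axes_in_span axis_in_span_tight by blast
  moreover have "tight {b}" "tight {a, d}" "tight {a}"
    using distinct_vertices by (auto simp: tight_iff)
  then have "cut_vector ends {b} \<in> span ?T" "cut_vector ends {a, d} \<in> span ?T"
    "cut_vector ends {a} \<in> span ?T"
    by (blast intro: span_base)+
  ultimately have "y + x $ e2 *\<^sub>R cut_vector ends {b} + x $ e3 *\<^sub>R cut_vector ends {a, d}
    + x $ e4 *\<^sub>R cut_vector ends {a} \<in> span ?T"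
    by (intro span_add span_scale)
  then show "x \<in> span ?T"
    by (simp add: y_def)
qed

lemma cycle_facet_of_cut_polytope:
  "(cut_polytope ends \<inter> {x. x $ e1 = x $ e2 + x $ e3 + x $ e4}) facet_of cut_polytope ends"
proof -
  let ?h = "axis e1 1 - axis e2 1 - axis e3 1 - axis e4 (1::real)"
  have h: "?h \<bullet> x = 0 \<longleftrightarrow> x $ e1 = x $ e2 + x $ e3 + x $ e4" for x
    by (simp add: inner_diff_left inner_axis') linarith
  have "(cut_polytope ends \<inter> {x. ?h \<bullet> x = 0}) facet_of cut_polytope ends"
  proof (rule cut_polytope_facetI[where R = "{c}"])
    show "?h \<bullet> cut_vector ends S \<le> 0" for S
      by (simp add: inner_diff_left inner_axis' cut_vector_edges)
    show "?h \<bullet> cut_vector ends {c} < 0"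
      using distinct_vertices by (auto simp: inner_diff_left inner_axis' cut_vector_edges)
    show "{x. ?h \<bullet> x = 0} \<subseteq> span {cut_vector ends S | S. ?h \<bullet> cut_vector ends S = 0}"
      unfolding h using hyperplane_subset_span by (simp add: tight_def)
  qed
  then show ?thesis
    unfolding h .
qed

end

lemma cut_polytope_complementary_facets:
  assumes sg: "simple_graph ends" and "edge_in_no_triangle ends \<or> has_induced_4cycle ends"
  obtains F F' where "F facet_of cut_polytope ends" "F' facet_of cut_polytope ends"
    and "\<forall>S. cut_vector ends S \<in> F' \<longleftrightarrow> cut_vector ends S \<notin> F"
  using assms(2)
proof (elim disjE)
  assume "edge_in_no_triangle ends"
  then obtain a b where ab: "adj ends a b" and no_triangle: "\<not> (\<exists>c. adj ends a c \<and> adj ends b c)"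
    unfolding edge_in_no_triangle_def by blast
  obtain e where "ends e = {a, b}"
    using adjE[OF ab] .
  then interpret triangle_free_edge ends a b e
    using sg no_triangle by unfold_locales
  let ?F = "cut_polytope ends \<inter> {x. x $ e = 0}"
  have complement: "cut_vector ends (sym_diff S {a}) \<in> ?F \<longleftrightarrow> cut_vector ends S \<notin> ?F" for S
    using ends_neq by (simp add: cut_vector_in_cut_polytope cut_vector_edge)
  obtain F' where "F' facet_of cut_polytope ends"
    "\<forall>S. cut_vector ends S \<in> F' \<longleftrightarrow> cut_vector ends S \<notin> ?F"
    using complementary_facet_by_switching[OF sg edge_facet_of_cut_polytope complement] .
  then show thesis
    using that[OF edge_facet_of_cut_polytope] by simp
next
  assume "has_induced_4cycle ends"
  then obtain a b c d where dist: "distinct [a, b, c, d]"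
    and adj: "adj ends a b" "adj ends b c" "adj ends c d" "adj ends d a"
    and no_chords: "\<not> adj ends a c" "\<not> adj ends b d"
    unfolding has_induced_4cycle_def by blast
  obtain e1 e2 e3 e4 where "ends e1 = {a, b}" "ends e2 = {b, c}" "ends e3 = {c, d}" "ends e4 = {d, a}"
    using adj unfolding adj_def by (metis rangeE)
  then interpret chordless_square ends a b c d e1 e2 e3 e4
    using sg dist no_chords by unfold_locales
  let ?F = "cut_polytope ends \<inter> {x. x $ e1 = x $ e2 + x $ e3 + x $ e4}"
  have complement: "cut_vector ends (sym_diff S {a, c}) \<in> ?F \<longleftrightarrow> cut_vector ends S \<notin> ?F" for S
    using tight_sym_diff by (simp add: cut_vector_in_cut_polytope tight_def)
  obtain F' where "F' facet_of cut_polytope ends"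
    "\<forall>S. cut_vector ends S \<in> F' \<longleftrightarrow> cut_vector ends S \<notin> ?F"
    using complementary_facet_by_switching[OF sg cycle_facet_of_cut_polytope complement] .
  then show thesis
    using that[OF cycle_facet_of_cut_polytope] by simp
qed

theorem lemma3p2:
  fixes ends :: "'e::finite \<Rightarrow> 'v::finite set"
    and \<Sigma> :: "(real ^ 'e) set" and d :: int
  assumes "simple_graph ends"
    and "compressed (cut_polytope ends)"
    and "special_simplex (cut_polytope ends) d \<Sigma>"
    and "edge_in_no_triangle ends \<or> has_induced_4cycle ends"
  shows "d = 1"
proof -
  obtain F F' where F: "F facet_of cut_polytope ends" and F': "F' facet_of cut_polytope ends"
    and complement: "\<forall>S. cut_vector ends S \<in> F' \<longleftrightarrow> cut_vector ends S \<notin> F"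
    using cut_polytope_complementary_facets[OF assms(1,4)] .
  have "v \<in> F' \<longleftrightarrow> v \<notin> F" if "v extreme_point_of cut_polytope ends" for v
    using extreme_point_of_cut_polytope[OF that] complement by blast
  then show ?thesis
    by (rule special_simplex_dim_eq_1[OF assms(3) F F'])
qed

end
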